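(* Let $R$ be a noncommutative division algebra over a field $F$, and let $p\in F[x]$ be a nonconstant polynomial. Then there exist elements $\alpha,\beta\in R$ such that $p(\alpha\beta)\neq p(\beta\alpha)$. *)

theory Defs
  imports "HOL-Computational_Algebra.Polynomial"
begin

text \<open>An F-algebra structure on a ring R is given by a unital ring homomorphism
  from the field F into R whose image lies in the centre of R.\<close>
definition algebra_map :: "('f::field \<Rightarrow> 'r::ring_1) \<Rightarrow> bool" where
  "algebra_map \<phi> \<longleftrightarrow>
     \<phi> 0 = 0 \<and> \<phi> 1 = 1 \<and>
     (\<forall>a b. \<phi> (a + b) = \<phi> a + \<phi> b) \<and>
     (\<forall>a b. \<phi> (a * b) = \<phi> a * \<phi> b) \<and>
     (\<forall>a x. \<phi> a * x = x * \<phi> a)"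

definition alg_eval :: "('f::field \<Rightarrow> 'r::ring_1) \<Rightarrow> 'f poly \<Rightarrow> 'r \<Rightarrow> 'r" where
  "alg_eval \<phi> p x = (\<Sum>i\<le>degree p. \<phi> (coeff p i) * x ^ i)"

end

(*
  If p(ab) = p(ba) for all a, b, then writing y = x (x^-1 y) gives p(y) = p(x^-1 y x) = x^-1 p(y) x,
  so p takes only central values. It remains to show that a division ring R in which a nonconstant
  polynomial over the centre takes only central values is commutative.

  If the centre Z is infinite, comparing coefficients of p(t y) and (y + t)^m in t ranging over Z
  (a Vandermonde argument) shows that y^m is central for all y, with m > 0 least such, and that all
  binomial coefficients (m choose j), 0 < j < m, vanish in R. Then (ad a)^m = ad (a^m) = 0, and a
  nilpotent inner derivation produces v with a v a^-1 = v + 1, contradicting (v + 1)^m = v^m + 1.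

  If Z is finite, every element is algebraic over Z and so has finite multiplicative order. For a
  noncentral a, decomposing any element that does not commute with a into eigencomponents of
  conjugation by a yields x <> 0 with x a x^-1 = a^j <> a. The additive closure of the monomials
  a^i x^l is a finite division ring, commutative by Wedderburn's little theorem (class equation
  plus cyclotomic polynomials): a contradiction.
*)

theory Submission
  imports Defs "HOL-Computational_Algebra.Primes" "HOL-Library.FuncSet"
begin

section \<open>Cyclotomic polynomials\<close>

definition primitive_roots_of_unity :: "nat \<Rightarrow> complex set" where
  "primitive_roots_of_unity k = {z. z ^ k = 1 \<and> (\<forall>j. 0 < j \<and> j < k \<longrightarrow> z ^ j \<noteq> 1)}"

definition cyclotomic_poly :: "nat \<Rightarrow> complex poly" where
  "cyclotomic_poly k = (\<Prod>z\<in>primitive_roots_of_unity k. [:-z, 1:])"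

lemma finite_primitive_roots_of_unity: "0 < k \<Longrightarrow> finite (primitive_roots_of_unity k)"
  by (rule finite_subset[OF _ finite_roots_unity[of k]]) (auto simp: primitive_roots_of_unity_def)

lemma primitive_roots_of_unity_disjoint:
  assumes "d \<noteq> d'" "0 < d" "0 < d'"
  shows "primitive_roots_of_unity d \<inter> primitive_roots_of_unity d' = {}"
  using assms by (cases "d < d'") (auto simp: primitive_roots_of_unity_def)

lemma roots_of_unity_eq_UN_primitive:
  assumes "0 < k"
  shows "{z::complex. z ^ k = 1} = (\<Union>d\<in>{d. d dvd k}. primitive_roots_of_unity d)"
proof (intro equalityI subsetI)
  fix z :: complex
  assume "z \<in> {z. z ^ k = 1}"
  then have zk: "z ^ k = 1" by simp
  obtain d where d: "0 < d" "z ^ d = 1" and least: "\<And>j. 0 < j \<Longrightarrow> j < d \<Longrightarrow> z ^ j \<noteq> 1"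
    using ex_least_nat_le[of "\<lambda>d. 0 < d \<and> z ^ d = 1" k] assms zk by auto
  have "z ^ k = (z ^ d) ^ (k div d) * z ^ (k mod d)"
    by (metis div_mult_mod_eq power_add power_mult mult.commute)
  then have "z ^ (k mod d) = 1" using zk d by simp
  then have "d dvd k" using least[of "k mod d"] d(1) by (meson mod_less_divisor mod_0_imp_dvd neq0_conv)
  moreover have "z \<in> primitive_roots_of_unity d"
    using d least by (auto simp: primitive_roots_of_unity_def)
  ultimately show "z \<in> (\<Union>d\<in>{d. d dvd k}. primitive_roots_of_unity d)" by blast
next
  fix z :: complex
  assume "z \<in> (\<Union>d\<in>{d. d dvd k}. primitive_roots_of_unity d)"
  then obtain d e where "k = d * e" "z ^ d = 1" by (auto simp: primitive_roots_of_unity_def)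
  then show "z \<in> {z. z ^ k = 1}" by (simp add: power_mult)
qed

lemma prod_linear_factors_dvd:
  fixes f :: "'a::idom poly"
  assumes "finite A" "\<And>z. z \<in> A \<Longrightarrow> poly f z = 0"
  shows "(\<Prod>z\<in>A. [:-z, 1:]) dvd f"
  using assms
proof (induction A rule: finite_induct)
  case (insert a A)
  then obtain g where g: "f = (\<Prod>z\<in>A. [:-z, 1:]) * g" by auto
  have "poly (\<Prod>z\<in>A. [:-z, 1:]) a \<noteq> 0"
    using insert.hyps by (auto simp: poly_prod)
  moreover have "poly f a = 0" using insert.prems by simp
  ultimately have "poly g a = 0" using g by simp
  then have "[:-a, 1:] dvd g" by (simp add: poly_eq_0_iff_dvd)
  then have "(\<Prod>z\<in>A. [:-z, 1:]) * [:-a, 1:] dvd f" using g by (metis dvd_refl mult_dvd_mono)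
  then show ?case using insert.hyps by (simp add: mult.commute)
qed simp

lemma degree_monom_minus_one:
  assumes "0 < k" shows "degree (monom 1 k - 1 :: 'a::comm_ring_1 poly) = k"
proof -
  have "monom 1 k - 1 = monom 1 k + (- 1 :: 'a poly)" by simp
  also have "degree \<dots> = k"
    using assms by (subst degree_add_eq_left) (auto simp: degree_monom_eq)
  finally show ?thesis .
qed

lemma monom_minus_one_eq_prod_roots_of_unity:
  assumes "0 < k"
  shows "(monom 1 k - 1 :: complex poly) = (\<Prod>z\<in>{z. z ^ k = 1}. [:-z, 1:])"
    (is "?f = ?P")
proof -
  have "?P dvd ?f"
    using finite_roots_unity assms by (intro prod_linear_factors_dvd) (auto simp: poly_monom)
  then obtain c where c: "?f = ?P * c" by (rule dvdE)
  have "degree ?P = k"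
    using card_roots_unity_eq[OF assms] by (subst degree_prod_eq_sum_degree) auto
  moreover have "degree ?f = k" by (rule degree_monom_minus_one[OF assms])
  moreover from this have "?f \<noteq> 0" using assms by auto
  ultimately have "degree c = 0" using c by (metis add_cancel_left_right degree_mult_eq mult_zero_left mult_zero_right)
  moreover have "lead_coeff ?f = lead_coeff ?P * lead_coeff c" using c lead_coeff_mult by metis
  moreover have "lead_coeff ?P = 1" by (simp add: lead_coeff_prod)
  moreover have "lead_coeff ?f = 1" using \<open>degree ?f = k\<close> assms by simp
  ultimately have "c = 1" by (metis degree_0_id mult_1 one_pCons)
  then show ?thesis using c by simp
qed

lemma monom_minus_one_eq_prod_cyclotomic:
  assumes "0 < k"
  shows "(monom 1 k - 1 :: complex poly) = (\<Prod>d\<in>{d. d dvd k}. cyclotomic_poly d)"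
proof -
  have "(monom 1 k - 1 :: complex poly) =
      (\<Prod>z\<in>(\<Union>d\<in>{d. d dvd k}. primitive_roots_of_unity d). [:-z, 1:])"
    using monom_minus_one_eq_prod_roots_of_unity roots_of_unity_eq_UN_primitive assms by simp
  also have "\<dots> = (\<Prod>d\<in>{d. d dvd k}. cyclotomic_poly d)"
    unfolding cyclotomic_poly_def using assms
    by (intro prod.UNION_disjoint) (auto intro: finite_primitive_roots_of_unity dest: dvd_pos_nat,
        metis IntI dvd_pos_nat empty_iff primitive_roots_of_unity_disjoint)
  finally show ?thesis .
qed

lemma lead_coeff_cyclotomic_poly: "lead_coeff (cyclotomic_poly k) = 1"
  by (simp add: cyclotomic_poly_def lead_coeff_prod)

lemma map_poly_of_int_add: "map_poly of_int (p + q) = map_poly of_int p + map_poly of_int q"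
  by (intro poly_eqI) (simp add: coeff_map_poly)

lemma map_poly_of_int_mult:
  "map_poly of_int (p * q) = (map_poly of_int p * map_poly of_int q :: 'a::comm_ring_1 poly)"
  by (intro poly_eqI) (simp add: coeff_map_poly coeff_mult)

lemma map_poly_of_int_prod:
  "map_poly of_int (prod f A) = (\<Prod>x\<in>A. map_poly of_int (f x) :: 'a::comm_ring_1 poly)"
  by (induction A rule: infinite_finite_induct) (auto simp: map_poly_of_int_mult)

lemma map_poly_of_int_eq_iff:
  "(map_poly of_int p :: 'a::ring_char_0 poly) = map_poly of_int q \<longleftrightarrow> p = q"
  by (auto simp: poly_eq_iff coeff_map_poly)

lemma degree_map_poly_of_int: "degree (map_poly of_int p :: 'a::ring_char_0 poly) = degree p"
  by (rule degree_map_poly) auto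

lemma lead_coeff_map_poly_of_int:
  "lead_coeff (map_poly of_int p :: 'a::ring_char_0 poly) = of_int (lead_coeff p)"
  by (simp add: coeff_map_poly degree_map_poly_of_int)

lemma poly_map_poly_of_int: "poly (map_poly of_int p) (of_int x) = (of_int (poly p x) :: 'a::comm_ring_1)"
  by (induction p) (auto simp: map_poly_pCons)

text \<open>Division with remainder by a monic integer polynomial stays in \<open>\<int>[x]\<close>; comparing degrees
  shows that the quotient taken in a larger ring is this integer quotient.\<close>

lemma map_poly_of_int_quotient:
  fixes F G :: "int poly" and h :: "'a::{idom, ring_char_0} poly"
  assumes monic: "lead_coeff G = 1" and eq: "map_poly of_int F = map_poly of_int G * h"
  shows "\<exists>H. h = map_poly of_int H"
proof -
  have "G \<noteq> 0" using monic by auto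
  obtain Q R where QR: "pseudo_divmod F G = (Q, R)" by fastforce
  have "F = G * Q + R" using pseudo_divmod(1)[OF \<open>G \<noteq> 0\<close> QR] monic by simp
  then have E: "map_poly of_int G * (h - map_poly of_int Q) = (map_poly of_int R :: 'a poly)"
    using eq by (simp add: map_poly_of_int_add map_poly_of_int_mult algebra_simps)
  have "h = map_poly of_int Q"
  proof (rule ccontr)
    assume "h \<noteq> map_poly of_int Q"
    moreover have "map_poly of_int G \<noteq> (0 :: 'a poly)"
      using \<open>G \<noteq> 0\<close> map_poly_of_int_eq_iff[of G 0] by simp
    ultimately have "R \<noteq> 0" "degree G \<le> degree R"
      using E map_poly_of_int_eq_iff[of R 0] degree_mult_eq[of "map_poly of_int G" "h - map_poly of_int Q"]
      by (auto simp: degree_map_poly_of_int)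
    then show False using pseudo_divmod(2)[OF \<open>G \<noteq> 0\<close> QR] by simp
  qed
  then show ?thesis ..
qed

lemma cyclotomic_poly_integral: "0 < k \<Longrightarrow> \<exists>P. map_poly of_int P = cyclotomic_poly k"
proof (induction k rule: less_induct)
  case (less k)
  define D where "D = {d. d dvd k \<and> d < k}"
  have "\<forall>d\<in>D. \<exists>P. map_poly of_int P = cyclotomic_poly d"
    using less by (auto simp: D_def dest: dvd_pos_nat)
  then obtain P where P: "\<And>d. d \<in> D \<Longrightarrow> map_poly of_int (P d) = cyclotomic_poly d" by metis
  have "lead_coeff (P d) = 1" if "d \<in> D" for d
    using lead_coeff_cyclotomic_poly[of d] lead_coeff_map_poly_of_int[of "P d"] P[OF that]
    by (metis of_int_eq_1_iff)
  then have monic: "lead_coeff (\<Prod>d\<in>D. P d) = 1" by (simp add: lead_coeff_prod)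
  have "{d. d dvd k} = insert k D"
    using less.prems by (auto simp: D_def dest: dvd_imp_le)
  moreover have "finite D" using less.prems by (auto simp: D_def)
  ultimately have "(monom 1 k - 1 :: complex poly) = cyclotomic_poly k * (\<Prod>d\<in>D. cyclotomic_poly d)"
    using monom_minus_one_eq_prod_cyclotomic[OF less.prems] by (simp add: D_def)
  moreover have "map_poly of_int (monom 1 k - 1) = (monom 1 k - 1 :: complex poly)"
    by (intro poly_eqI) (simp add: coeff_map_poly of_int_poly)
  ultimately have "map_poly of_int (monom 1 k - 1) = cyclotomic_poly k * (\<Prod>d\<in>D. cyclotomic_poly d)"
    by simp
  also have "\<dots> = map_poly of_int (\<Prod>d\<in>D. P d) * cyclotomic_poly k"
    by (simp add: map_poly_of_int_prod P mult.commute)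
  finally show ?case using map_poly_of_int_quotient[OF monic] by metis
qed

lemma power_minus_one_eq_prod_cyclotomic_values:
  fixes q :: int
  assumes P: "\<And>d. 0 < d \<Longrightarrow> map_poly of_int (P d) = cyclotomic_poly d" and "0 < k"
  shows "q ^ k - 1 = (\<Prod>d\<in>{d. d dvd k}. poly (P d) q)"
proof -
  have "(of_int (q ^ k - 1) :: complex) = poly (monom 1 k - 1) (of_int q)"
    by (simp add: poly_monom)
  also have "\<dots> = (\<Prod>d\<in>{d. d dvd k}. poly (cyclotomic_poly d) (of_int q))"
    by (simp add: monom_minus_one_eq_prod_cyclotomic[OF \<open>0 < k\<close>] poly_prod)
  also have "\<dots> = of_int (\<Prod>d\<in>{d. d dvd k}. poly (P d) q)"
    unfolding of_int_prod
    by (rule prod.cong) (use \<open>0 < k\<close> in \<open>auto simp: poly_map_poly_of_int[symmetric] P dest: dvd_pos_nat\<close>)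
  finally show ?thesis by (simp only: of_int_eq_iff)
qed

lemma primitive_roots_of_unity_nonempty:
  assumes "0 < n"
  shows "primitive_roots_of_unity n \<noteq> {}"
proof -
  define w where "w = cis (2 * pi / real n)"
  have w_power: "w ^ j = cis (2 * pi * real j / real n)" for j
    by (simp add: w_def DeMoivre mult.commute)
  have "inj_on (\<lambda>j. cis (2 * pi * real j / real n)) {..<n}"
    using bij_betw_roots_unity[OF assms] by (simp add: bij_betw_def)
  then have "w ^ j \<noteq> w ^ 0" if "0 < j" "j < n" for j
    using that unfolding w_power by (metis inj_on_eq_iff lessThan_iff neq0_conv assms)
  moreover have "w ^ n = 1" using w_power[of n] assms by simp
  ultimately have "w \<in> primitive_roots_of_unity n" by (auto simp: primitive_roots_of_unity_def)
  then show ?thesis by auto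
qed

lemma norm_diff_root_of_unity_gt:
  fixes z :: complex and q :: real
  assumes "norm z = 1" "z \<noteq> 1" "0 < q"
  shows "q - 1 < norm (of_real q - z)"
proof -
  have "Re z \<noteq> 1"
  proof
    assume "Re z = 1"
    then have "Im z = 0" using cmod_power2[of z] assms(1) by simp
    then show False using \<open>Re z = 1\<close> assms(2) by (simp add: complex_eq_iff)
  qed
  then have "Re z < 1" using complex_Re_le_cmod[of z] assms(1) by simp
  have "(q - 1)\<^sup>2 < q\<^sup>2 - 2 * q * Re z + 1"
    using \<open>Re z < 1\<close> assms(3) by (simp add: power2_eq_square algebra_simps)
  also have "\<dots> = (norm (of_real q - z))\<^sup>2"
    using cmod_power2[of "of_real q - z"] cmod_power2[of z] assms(1)
    by (simp add: power2_eq_square algebra_simps)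
  finally show ?thesis by (rule power2_less_imp_less) simp
qed

lemma norm_cyclotomic_poly_gt:
  fixes q :: real
  assumes "2 \<le> n" "2 \<le> q"
  shows "q - 1 < norm (poly (cyclotomic_poly n) (of_real q))"
proof -
  define f where "f z = norm (of_real q - z)" for z :: complex
  have f_gt: "q - 1 < f z" if "z \<in> primitive_roots_of_unity n" for z
  proof -
    have "z ^ n = 1" "z \<noteq> 1" using that assms(1) by (auto simp: primitive_roots_of_unity_def)
    moreover from this have "norm z = 1"
      using assms(1) by (metis norm_ge_zero norm_one norm_power power_eq_imp_eq_base power_one
          less_le_trans pos2)
    ultimately show ?thesis using norm_diff_root_of_unity_gt assms(2) by (simp add: f_def)
  qed
  have fin: "finite (primitive_roots_of_unity n)" using assms(1) by (simp add: finite_primitive_roots_of_unity)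
  obtain z0 where z0: "z0 \<in> primitive_roots_of_unity n"
    using primitive_roots_of_unity_nonempty assms(1) by fastforce
  have "1 \<le> (\<Prod>z\<in>primitive_roots_of_unity n - {z0}. f z)"
    using f_gt assms(2) by (intro prod_ge_1) (smt (verit) DiffD1)
  then have "f z0 \<le> f z0 * (\<Prod>z\<in>primitive_roots_of_unity n - {z0}. f z)"
    by (metis f_def mult.right_neutral mult_left_mono norm_ge_zero)
  also have "\<dots> = (\<Prod>z\<in>primitive_roots_of_unity n. f z)"
    by (simp add: prod.remove[OF fin z0])
  also have "\<dots> = norm (poly (cyclotomic_poly n) (of_real q))"
    by (simp add: cyclotomic_poly_def poly_prod prod_norm f_def)
  finally show ?thesis using f_gt[OF z0] by simp
qed

lemma cyclotomic_common_divisor: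
  fixes q :: int
  assumes "2 \<le> n" "2 \<le> q"
  shows "\<exists>c. q - 1 < \<bar>c\<bar> \<and> (\<forall>d. d dvd n \<longrightarrow> d < n \<longrightarrow> (q ^ d - 1) * c dvd q ^ n - 1)"
proof -
  obtain P where P: "\<And>d. 0 < d \<Longrightarrow> map_poly of_int (P d) = cyclotomic_poly d"
    using cyclotomic_poly_integral by metis
  define c where "c = poly (P n) q"
  have "q - 1 < \<bar>c\<bar>"
  proof -
    have "(of_int c :: complex) = poly (map_poly of_int (P n)) (of_int q)"
      by (simp add: c_def poly_map_poly_of_int)
    then have "poly (cyclotomic_poly n) (of_int q) = (of_int c :: complex)"
      using P[of n] assms(1) by simp
    then have "norm (poly (cyclotomic_poly n) (of_real (of_int q))) = of_int \<bar>c\<bar>"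
      by simp
    then show ?thesis using norm_cyclotomic_poly_gt[of n "of_int q"] assms by simp
  qed
  moreover have "(q ^ d - 1) * c dvd q ^ n - 1" if "d dvd n" "d < n" for d
  proof -
    have "0 < n" "0 < d" using assms(1) that by (auto dest: dvd_pos_nat)
    define E where "E = {e. e dvd n \<and> \<not> e dvd d \<and> e \<noteq> n}"
    have split: "{e. e dvd n} = insert n ({e. e dvd d} \<union> E)"
      using that by (auto simp: E_def intro: dvd_trans)
    have "n \<notin> {e. e dvd d} \<union> E" using that \<open>0 < d\<close> by (auto simp: E_def dest: dvd_imp_le)
    moreover have "finite {e. e dvd d}" "finite E" using \<open>0 < n\<close> \<open>0 < d\<close> by (auto simp: E_def)
    moreover have "{e. e dvd d} \<inter> E = {}" by (auto simp: E_def)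
    ultimately have "q ^ n - 1 = c * ((q ^ d - 1) * (\<Prod>e\<in>E. poly (P e) q))"
      using power_minus_one_eq_prod_cyclotomic_values[OF P] \<open>0 < n\<close> \<open>0 < d\<close>
      by (simp add: split prod.union_disjoint c_def)
    then show ?thesis by (simp add: mult_ac)
  qed
  ultimately show ?thesis by blast
qed

section \<open>Centralizers and sub-division rings\<close>

definition centralizer :: "'a::ring set \<Rightarrow> 'a set" where
  "centralizer T = {z. \<forall>t\<in>T. z * t = t * z}"

abbreviation center :: "'a::ring set" where
  "center \<equiv> centralizer UNIV"

lemma centralizerI: "(\<And>t. t \<in> T \<Longrightarrow> z * t = t * z) \<Longrightarrow> z \<in> centralizer T"
  by (simp add: centralizer_def)

lemma centralizerD: "z \<in> centralizer T \<Longrightarrow> t \<in> T \<Longrightarrow> z * t = t * z"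
  by (simp add: centralizer_def)

lemma centerD: "z \<in> center \<Longrightarrow> z * x = x * z"
  by (simp add: centralizer_def)

lemma zero_in_centralizer [simp]: "0 \<in> centralizer T"
  by (simp add: centralizer_def)

lemma one_in_centralizer [simp]: "(1 :: 'a::ring_1) \<in> centralizer T"
  by (simp add: centralizer_def)

lemma of_nat_in_centralizer [simp]: "(of_nat n :: 'a::ring_1) \<in> centralizer T"
  by (simp add: centralizer_def mult_of_nat_commute)

lemma centralizer_add [intro]: "a \<in> centralizer T \<Longrightarrow> b \<in> centralizer T \<Longrightarrow> a + b \<in> centralizer T"
  by (simp add: centralizer_def distrib_left distrib_right)

lemma centralizer_uminus [intro]: "a \<in> centralizer T \<Longrightarrow> - a \<in> centralizer T"
  by (simp add: centralizer_def)

lemma centralizer_diff [intro]: "a \<in> centralizer T \<Longrightarrow> b \<in> centralizer T \<Longrightarrow> a - b \<in> centralizer T"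
  by (simp add: centralizer_def left_diff_distrib right_diff_distrib)

lemma centralizer_mult [intro]: "a \<in> centralizer T \<Longrightarrow> b \<in> centralizer T \<Longrightarrow> a * b \<in> centralizer T"
  by (simp add: centralizer_def) (metis mult.assoc)

lemma centralizer_power [intro]: "(a :: 'a::ring_1) \<in> centralizer T \<Longrightarrow> a ^ k \<in> centralizer T"
  by (induction k) auto

lemma centralizer_inverse [intro]:
  "(a :: 'a::division_ring) \<in> centralizer T \<Longrightarrow> inverse a \<in> centralizer T"
  by (simp add: centralizer_def mult_commute_imp_mult_inverse_commute)

lemma centralizer_mult_cancel_left:
  fixes c y :: "'a::division_ring"
  assumes "c \<in> centralizer T" "c \<noteq> 0" "c * y \<in> centralizer T"
  shows "y \<in> centralizer T"
proof -
  have "inverse c * (c * y) \<in> centralizer T" using assms by blast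
  then show ?thesis using assms(2) by (simp add: mult.assoc[symmetric])
qed

locale sub_division_ring =
  fixes S :: "'a::division_ring set"
  assumes zero_mem [simp]: "0 \<in> S"
    and one_mem [simp]: "1 \<in> S"
    and add_mem: "x \<in> S \<Longrightarrow> y \<in> S \<Longrightarrow> x + y \<in> S"
    and mult_mem: "x \<in> S \<Longrightarrow> y \<in> S \<Longrightarrow> x * y \<in> S"
    and uminus_mem: "x \<in> S \<Longrightarrow> - x \<in> S"
    and inverse_mem: "x \<in> S \<Longrightarrow> inverse x \<in> S"

locale finite_sub_division_ring = sub_division_ring +
  assumes finite_S [simp]: "finite S"

context sub_division_ring
begin

lemma diff_mem: "x \<in> S \<Longrightarrow> y \<in> S \<Longrightarrow> x - y \<in> S"
  using add_mem uminus_mem by (metis diff_conv_add_uminus)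

lemma sub_division_ring_Int_centralizer: "sub_division_ring (S \<inter> centralizer T)"
  by unfold_locales (auto intro: add_mem mult_mem uminus_mem inverse_mem)

end

lemma (in finite_sub_division_ring) finite_sub_division_ring_Int_centralizer:
  "finite_sub_division_ring (S \<inter> centralizer T)"
  using sub_division_ring_Int_centralizer by (simp add: finite_sub_division_ring_def finite_sub_division_ring_axioms_def)

section \<open>Wedderburn's little theorem\<close>

definition left_module :: "'a::ring set \<Rightarrow> 'a set \<Rightarrow> bool" where
  "left_module K V \<longleftrightarrow> 0 \<in> V \<and> (\<forall>x\<in>V. \<forall>y\<in>V. x + y \<in> V) \<and> (\<forall>k\<in>K. \<forall>v\<in>V. k * v \<in> V)"

context sub_division_ring
begin

lemma inj_on_extend_left_module:
  assumes W: "left_module S W" and "v \<notin> W"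
  shows "inj_on (\<lambda>(k, w). k * v + w) (S \<times> W)"
proof (rule inj_onI, clarsimp)
  fix k1 w1 k2 w2
  assume "k1 \<in> S" "w1 \<in> W" "k2 \<in> S" "w2 \<in> W" and eq: "k1 * v + w1 = k2 * v + w2"
  show "k1 = k2 \<and> w1 = w2"
  proof (cases "k1 = k2")
    case False
    have add: "x \<in> W \<Longrightarrow> y \<in> W \<Longrightarrow> x + y \<in> W" and smult: "k \<in> S \<Longrightarrow> x \<in> W \<Longrightarrow> k * x \<in> W"
      for x y k using W by (auto simp: left_module_def)
    have "w2 - w1 \<in> W"
      using add[OF \<open>w2 \<in> W\<close> smult[OF uminus_mem[OF one_mem] \<open>w1 \<in> W\<close>]] by simp
    then have "inverse (k1 - k2) * (w2 - w1) \<in> W"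
      using \<open>k1 \<in> S\<close> \<open>k2 \<in> S\<close> by (intro smult inverse_mem diff_mem)
    moreover have "(k1 - k2) * v = w2 - w1" using eq by (simp add: algebra_simps)
    then have "inverse (k1 - k2) * (w2 - w1) = v" using False
      by (metis left_inverse mult.assoc mult_1 right_minus_eq)
    ultimately show ?thesis using \<open>v \<notin> W\<close> by simp
  qed (use eq in simp)
qed

lemma left_module_extend:
  assumes W: "left_module S W" and "v \<notin> W"
  defines "W' \<equiv> (\<lambda>(k, w). k * v + w) ` (S \<times> W)"
  shows "left_module S W'" "card W' = card S * card W" "insert v W \<subseteq> W'"
proof -
  have add: "x \<in> W \<Longrightarrow> y \<in> W \<Longrightarrow> x + y \<in> W" and smult: "k \<in> S \<Longrightarrow> x \<in> W \<Longrightarrow> k * x \<in> W"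
    for x y k using W by (auto simp: left_module_def)
  show "left_module S W'"
    unfolding left_module_def W'_def
  proof (intro conjI ballI)
    show "0 \<in> (\<lambda>(k, w). k * v + w) ` (S \<times> W)"
      using W by (auto simp: left_module_def intro!: image_eqI[of _ _ "(0, 0)"])
  next
    fix x y assume "x \<in> (\<lambda>(k, w). k * v + w) ` (S \<times> W)" "y \<in> (\<lambda>(k, w). k * v + w) ` (S \<times> W)"
    then obtain k1 w1 k2 w2 where "k1 \<in> S" "w1 \<in> W" "k2 \<in> S" "w2 \<in> W" "x = k1 * v + w1" "y = k2 * v + w2"
      by auto
    then show "x + y \<in> (\<lambda>(k, w). k * v + w) ` (S \<times> W)"
      by (intro image_eqI[of _ _ "(k1 + k2, w1 + w2)"]) (auto simp: algebra_simps add_mem add)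
  next
    fix k x assume "k \<in> S" "x \<in> (\<lambda>(k, w). k * v + w) ` (S \<times> W)"
    then obtain k1 w1 where "k1 \<in> S" "w1 \<in> W" "x = k1 * v + w1" by auto
    then show "k * x \<in> (\<lambda>(k, w). k * v + w) ` (S \<times> W)"
      using \<open>k \<in> S\<close> by (intro image_eqI[of _ _ "(k * k1, k * w1)"]) (auto simp: algebra_simps mult_mem smult)
  qed
  show "card W' = card S * card W"
    using inj_on_extend_left_module[OF W \<open>v \<notin> W\<close>] by (simp add: W'_def card_image card_cartesian_product)
  show "insert v W \<subseteq> W'"
    using W by (force simp: W'_def left_module_def intro: image_eqI[of _ _ "(1, 0)"] image_eqI[of _ _ "(0, w)" for w])
qed

end

context finite_sub_division_ring
begin

lemma card_left_module:
  assumes "left_module S V" "finite V"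
  shows "\<exists>m. card V = card S ^ m"
proof -
  have "\<exists>m. card V = card W * card S ^ m" if "left_module S W" "W \<subseteq> V" for W
    using that
  proof (induction "card V - card W" arbitrary: W rule: less_induct)
    case less
    show ?case
    proof (cases "W = V")
      case False
      then obtain v where "v \<in> V" "v \<notin> W" using less.prems(2) by auto
      define W' where "W' = (\<lambda>(k, w). k * v + w) ` (S \<times> W)"
      note W' = left_module_extend[OF less.prems(1) \<open>v \<notin> W\<close>, folded W'_def]
      have "W' \<subseteq> V"
        using \<open>v \<in> V\<close> less.prems assms(1) by (auto simp: W'_def left_module_def)
      then have "card W < card W'" "card W' \<le> card V"
        using W'(3) \<open>v \<notin> W\<close> assms(2) by (auto intro!: psubset_card_mono card_mono dest: finite_subset)
      then have "card V - card W' < card V - card W" by linarith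
      then obtain m where "card V = card W' * card S ^ m"
        using less.hyps[OF _ W'(1) \<open>W' \<subseteq> V\<close>] by blast
      then show ?thesis using W'(2) by (auto intro: exI[of _ "Suc m"])
    qed (auto intro: exI[of _ 0])
  qed
  from this[of "{0}"] assms(1) show ?thesis by (simp add: left_module_def)
qed

lemma card_sub_division_ring_superset:
  assumes "sub_division_ring L" "S \<subseteq> L" "finite L"
  shows "\<exists>m. card L = card S ^ m"
  using assms by (intro card_left_module) (auto simp: left_module_def sub_division_ring_def)

end

definition conjugates :: "'a::division_ring set \<Rightarrow> 'a \<Rightarrow> 'a set" where
  "conjugates S x = (\<lambda>u. u * x * inverse u) ` (S - {0})"

lemma conj_mult_eq_iff:
  fixes t v x :: "'a::division_ring"
  assumes "v \<noteq> 0" "t \<noteq> 0"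
  shows "v * t * x * inverse (v * t) = v * x * inverse v \<longleftrightarrow> t * x = x * t"
proof -
  have "v * t * x * inverse (v * t) = v * (t * x * inverse t) * inverse v"
    using assms by (simp add: nonzero_inverse_mult_distrib mult.assoc)
  moreover have "v * a * inverse v = v * b * inverse v \<longleftrightarrow> a = b" for a b
    using assms(1) by (metis inverse_zero_imp_zero mult_left_cancel mult_right_cancel)
  moreover have "t * x * inverse t = x \<longleftrightarrow> t * x = x * t"
    using assms(2) by (metis mult.assoc mult.right_neutral right_inverse left_inverse)
  ultimately show ?thesis by simp
qed

context sub_division_ring
begin

lemma conjugates_subset: "x \<in> S \<Longrightarrow> conjugates S x \<subseteq> S"
  by (auto simp: conjugates_def intro!: mult_mem inverse_mem)

lemma mem_conjugates_self: "x \<in> conjugates S x"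
  unfolding conjugates_def by (rule image_eqI[of _ _ 1]) auto

lemma conjugates_mono:
  assumes "y \<in> conjugates S x"
  shows "conjugates S y \<subseteq> conjugates S x"
proof -
  obtain v where v: "v \<in> S" "v \<noteq> 0" "y = v * x * inverse v" using assms by (auto simp: conjugates_def)
  have "u * (v * x * inverse v) * inverse u = (u * v) * x * inverse (u * v)" if "u \<noteq> 0" for u
    using that v(2) by (simp add: nonzero_inverse_mult_distrib mult.assoc)
  then show ?thesis
    using v by (auto simp: conjugates_def intro!: mult_mem)
qed

lemma conjugates_sym:
  assumes "y \<in> conjugates S x"
  shows "x \<in> conjugates S y"
proof -
  obtain v where v: "v \<in> S" "v \<noteq> 0" "y = v * x * inverse v" using assms by (auto simp: conjugates_def)
  then have "x = inverse v * y * inverse (inverse v)"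
    by (simp add: mult.assoc) (simp add: mult.assoc[symmetric])
  then show ?thesis
    unfolding conjugates_def using v by (auto intro!: image_eqI[of _ _ "inverse v"] inverse_mem)
qed

lemma conjugates_eq: "y \<in> conjugates S x \<Longrightarrow> conjugates S y = conjugates S x"
  by (meson conjugates_mono conjugates_sym equalityI)

lemma conjugates_disjoint_centralizer:
  assumes "x \<notin> centralizer S"
  shows "conjugates S x \<inter> centralizer S = {}"
proof -
  have "z \<notin> centralizer S" if "u \<in> S" "u \<noteq> 0" "z = u * x * inverse u" for u z
  proof
    assume "z \<in> centralizer S"
    then have "x = inverse u * (z * u)"
      using that by (simp add: mult.assoc) (simp add: mult.assoc[symmetric])
    also have "\<dots> = z" using \<open>z \<in> centralizer S\<close> that by (simp add: centralizerD mult.assoc[symmetric])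
    finally show False using assms \<open>z \<in> centralizer S\<close> by simp
  qed
  then show ?thesis by (auto simp: conjugates_def)
qed

end

lemma (in finite_sub_division_ring) card_conjugates:
  assumes "x \<in> S"
  shows "card (S - {0}) = card (conjugates S x) * card (S \<inter> centralizer {x} - {0})"
proof -
  define C where "C = S \<inter> centralizer {x} - {0}"
  define F where "F c = {u \<in> S - {0}. u * x * inverse u = c}" for c
  have "card (F c) = card C" if c: "c \<in> conjugates S x" for c
  proof -
    obtain v where v: "v \<in> S" "v \<noteq> 0" "c = v * x * inverse v"
      using c unfolding conjugates_def by blast
    have "F c = (\<lambda>t. v * t) ` C"
    proof (intro equalityI subsetI)
      fix u assume "u \<in> F c"
      then have "u \<in> S" "u \<noteq> 0" "v * (inverse v * u) = u" using v by (auto simp: F_def mult.assoc[symmetric])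
      moreover from this have "inverse v * u \<in> C"
        using \<open>u \<in> F c\<close> v conj_mult_eq_iff[of v "inverse v * u" x]
        by (auto simp: F_def C_def centralizer_def intro!: mult_mem inverse_mem)
      ultimately show "u \<in> (\<lambda>t. v * t) ` C" by (metis image_eqI)
    next
      fix u assume "u \<in> (\<lambda>t. v * t) ` C"
      then show "u \<in> F c"
        using v conj_mult_eq_iff[of v _ x] by (auto simp: F_def C_def centralizer_def intro: mult_mem)
    qed
    moreover have "inj_on (\<lambda>t. v * t) C" using v(2) by (auto intro: inj_onI)
    ultimately show ?thesis by (simp add: card_image)
  qed
  moreover have "S - {0} = (\<Union>c\<in>conjugates S x. F c)"
    by (auto simp: F_def conjugates_def)
  moreover have "card (\<Union>c\<in>conjugates S x. F c) = (\<Sum>c\<in>conjugates S x. card (F c))"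
    by (rule card_UN_disjoint) (auto simp: F_def conjugates_def)
  ultimately show ?thesis by (simp add: C_def)
qed

lemma dvd_card_if_dvd_card_classes:
  fixes cl :: "'a \<Rightarrow> 'a set" and c :: int
  assumes "finite A"
    and "\<And>x. x \<in> A \<Longrightarrow> x \<in> cl x" "\<And>x. x \<in> A \<Longrightarrow> cl x \<subseteq> A"
    and "\<And>x y. x \<in> A \<Longrightarrow> y \<in> cl x \<Longrightarrow> cl y = cl x"
    and "\<And>x. x \<in> A \<Longrightarrow> c dvd int (card (cl x))"
  shows "c dvd int (card A)"
proof -
  have "A = \<Union>(cl ` A)" using assms(2,3) by blast
  moreover have "pairwise disjnt (cl ` A)"
    unfolding pairwise_def disjnt_def using assms(3,4) by (metis disjoint_iff imageE)
  ultimately have "card A = sum card (cl ` A)"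
    using assms(1,3) by (metis card_Union_disjoint finite_subset imageE)
  then show ?thesis using assms(5) by (auto intro: dvd_sum)
qed

context finite_sub_division_ring
begin

lemma two_le_card: "2 \<le> card S"
proof -
  have "{0, 1} \<subseteq> S" by simp
  then have "card {0, 1 :: 'a} \<le> card S" by (intro card_mono) auto
  then show ?thesis by simp
qed

lemma card_conjugates_noncentral:
  defines "q \<equiv> card (S \<inter> centralizer S)"
  assumes n: "card S = q ^ n" and y: "y \<in> S" "y \<notin> centralizer S"
  shows "\<exists>d. d dvd n \<and> d < n \<and> 1 < int q ^ d \<and>
    int q ^ n - 1 = (int q ^ d - 1) * int (card (conjugates S y))"
proof -
  define Z where "Z = S \<inter> centralizer S"
  define C where "C = S \<inter> centralizer {y}"
  interpret Z: finite_sub_division_ring Z unfolding Z_def by (rule finite_sub_division_ring_Int_centralizer)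
  interpret C: finite_sub_division_ring C unfolding C_def by (rule finite_sub_division_ring_Int_centralizer)
  have "Z \<subseteq> C" using y(1) by (auto simp: Z_def C_def centralizer_def)
  then obtain d where d: "card C = q ^ d"
    using Z.card_sub_division_ring_superset[OF C.sub_division_ring_axioms] by (auto simp: q_def Z_def)
  obtain m where "card S = card C ^ m"
    using C.card_sub_division_ring_superset[OF sub_division_ring_axioms] by (auto simp: C_def)
  then have "q ^ n = q ^ (d * m)" using n d by (simp add: power_mult)
  then have "d dvd n" using Z.two_le_card by (simp add: q_def Z_def)
  moreover obtain t where "t \<in> S" "y * t \<noteq> t * y" using y(2) by (auto simp: centralizer_def)
  then have "t \<notin> C" by (auto simp: C_def centralizer_def)
  then have "card C < card S" using \<open>t \<in> S\<close> by (intro psubset_card_mono) (auto simp: C_def)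
  then have "d < n" using n d Z.two_le_card by (simp add: q_def Z_def)
  moreover have "1 < int q ^ d" "1 \<le> q ^ d" using C.two_le_card d by (simp_all flip: of_nat_power)
  moreover have "int (q ^ n - 1) = int (card (conjugates S y)) * int (q ^ d - 1)"
    using card_conjugates[OF y(1)] n d by (simp add: C_def)
  ultimately show ?thesis
    using two_le_card n by (intro exI[of _ d]) (simp add: mult.commute)
qed

text \<open>The class equation: counting the nonzero elements of \<open>S\<close> by conjugacy classes,
  every noncentral class has a size divisible by \<open>\<Phi>\<^sub>n(q)\<close>, which therefore divides \<open>q - 1\<close>.\<close>

theorem mult_commute:
  assumes "x \<in> S" "y \<in> S"
  shows "x * y = y * x"
proof (rule ccontr)
  assume "x * y \<noteq> y * x"
  define Z where "Z = S \<inter> centralizer S"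
  define q where "q = card Z"
  interpret Z: finite_sub_division_ring Z unfolding Z_def by (rule finite_sub_division_ring_Int_centralizer)
  have q: "2 \<le> q" using Z.two_le_card by (simp add: q_def)
  obtain n where n: "card S = q ^ n"
    using Z.card_sub_division_ring_superset[OF sub_division_ring_axioms] by (auto simp: Z_def q_def)
  have "x \<notin> Z" using assms \<open>x * y \<noteq> y * x\<close> by (auto simp: Z_def centralizer_def)
  then have "card Z < card S" using assms(1) by (intro psubset_card_mono) (auto simp: Z_def)
  then have "q < q ^ n" by (simp add: n q_def)
  then have "2 \<le> n" using q by (cases n; cases "n - 1") auto
  then obtain c where c: "int q - 1 < \<bar>c\<bar>"
    and c_dvd: "\<And>d. d dvd n \<Longrightarrow> d < n \<Longrightarrow> (int q ^ d - 1) * c dvd int q ^ n - 1"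
    using cyclotomic_common_divisor[of n "int q"] q by auto
  have class_dvd: "c dvd int (card (conjugates S z))" if z: "z \<in> S - Z" for z
  proof -
    obtain d where d: "d dvd n" "d < n" "1 < int q ^ d"
      and "int q ^ n - 1 = (int q ^ d - 1) * int (card (conjugates S z))"
      using card_conjugates_noncentral[of n z] n z by (auto simp: Z_def q_def)
    then have "(int q ^ d - 1) * c dvd (int q ^ d - 1) * int (card (conjugates S z))"
      using c_dvd[OF d(1,2)] by simp
    then show ?thesis using d(3) by simp
  qed
  have c_dvd_card: "c dvd int (card (S - Z))"
  proof (rule dvd_card_if_dvd_card_classes[where cl = "conjugates S"])
    fix z w assume "z \<in> S - Z"
    show "conjugates S z \<subseteq> S - Z"
      using \<open>z \<in> S - Z\<close> conjugates_subset conjugates_disjoint_centralizer by (auto simp: Z_def)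
    show "z \<in> conjugates S z" by (rule mem_conjugates_self)
    show "c dvd int (card (conjugates S z))" using \<open>z \<in> S - Z\<close> by (rule class_dvd)
    show "w \<in> conjugates S z \<Longrightarrow> conjugates S w = conjugates S z" by (rule conjugates_eq)
  qed simp
  have "int (card (S - Z)) = (int q ^ n - 1) - (int q - 1)"
    using n \<open>card Z < card S\<close> by (simp add: Z_def q_def card_Diff_subset)
  moreover have "c dvd int q ^ n - 1" using c_dvd[of 1] \<open>2 \<le> n\<close> by (simp add: dvd_mult_right)
  ultimately have "c dvd int q - 1"
    using dvd_diff[of c "int q ^ n - 1" "int (card (S - Z))"] c_dvd_card by simp
  then show False using c q dvd_imp_le_int[of "int q - 1" c] by simp
qed

end

section \<open>Binomial expansions in noncommutative rings\<close>

text \<open>The binomial theorem for commuting elements and the expansion of \<open>(ad a)\<^sup>k\<close> are both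
  instances of iterating an additive map that acts on a doubly indexed family by Pascal's rule.\<close>

lemma funpow_pascal:
  fixes T :: "'a::ring_1 \<Rightarrow> 'a" and F :: "nat \<Rightarrow> nat \<Rightarrow> 'a"
  assumes add: "\<And>x y. T (x + y) = T x + T y"
    and of_nat: "\<And>c x. T (of_nat c * x) = of_nat c * T x"
    and step: "\<And>i j. T (F i j) = F (Suc i) j + F i (Suc j)"
  shows "(T ^^ k) (F 0 0) = (\<Sum>i\<le>k. of_nat (k choose i) * F (k - i) i)"
proof (induction k)
  case (Suc k)
  have T_sum: "T (sum g A) = (\<Sum>i\<in>A. T (g i))" for g and A :: "nat set"
    using sum_comp_morphism[of T g A] add add[of 0 0] by (simp add: o_def)
  have "(T ^^ Suc k) (F 0 0) = (\<Sum>i\<le>k. of_nat (k choose i) * F (Suc (k - i)) i)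
      + (\<Sum>i\<le>k. of_nat (k choose i) * F (k - i) (Suc i))"
    by (simp add: Suc T_sum of_nat step distrib_left sum.distrib)
  also have "(\<Sum>i\<le>k. of_nat (k choose i) * F (Suc (k - i)) i)
      = F (Suc k) 0 + (\<Sum>i\<le>k. of_nat (k choose Suc i) * F (k - i) (Suc i))"
  proof -
    have "(\<Sum>i\<le>k. of_nat (k choose i) * F (Suc (k - i)) i)
        = (\<Sum>i\<le>Suc k. of_nat (k choose i) * F (Suc k - i) i)"
      by (simp add: Suc_diff_le binomial_eq_0)
    also have "\<dots> = F (Suc k) 0 + (\<Sum>i\<le>k. of_nat (k choose Suc i) * F (k - i) (Suc i))"
      by (subst sum.atMost_Suc_shift) simp
    finally show ?thesis .
  qed
  also have "F (Suc k) 0 + (\<Sum>i\<le>k. of_nat (k choose Suc i) * F (k - i) (Suc i))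
      + (\<Sum>i\<le>k. of_nat (k choose i) * F (k - i) (Suc i))
      = F (Suc k) 0 + (\<Sum>i\<le>k. of_nat (Suc k choose Suc i) * F (k - i) (Suc i))"
    by (simp add: sum.distrib[symmetric] distrib_right add_ac)
  also have "\<dots> = (\<Sum>i\<le>Suc k. of_nat (Suc k choose i) * F (Suc k - i) i)"
    by (subst sum.atMost_Suc_shift) simp
  finally show ?case .
qed simp

lemma power_intertwine: "a * x = y * a \<Longrightarrow> a * x ^ k = y ^ k * (a :: 'a::monoid_mult)"
  by (induction k) (simp_all add: mult.assoc[symmetric], metis mult.assoc)

lemma binomial_commuting:
  fixes a b :: "'a::ring_1"
  assumes "a * b = b * a"
  shows "(a + b) ^ k = (\<Sum>i\<le>k. of_nat (k choose i) * (a ^ (k - i) * b ^ i))"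
proof -
  have "((\<lambda>z. (a + b) * z) ^^ k) (a ^ 0 * b ^ 0) = (\<Sum>i\<le>k. of_nat (k choose i) * (a ^ (k - i) * b ^ i))"
  proof (rule funpow_pascal)
    have "b * a ^ i = a ^ i * b" for i using power_commuting_commutes[of a b i] assms by simp
    then show "(a + b) * (a ^ i * b ^ j) = a ^ Suc i * b ^ j + a ^ i * b ^ Suc j" for i j
      by (simp add: distrib_right mult.assoc[symmetric])
    show "(a + b) * (of_nat c * z) = of_nat c * ((a + b) * z)" for c z
      by (metis mult.assoc mult_of_nat_commute)
  qed (simp add: distrib_left)
  moreover have "((\<lambda>z. (a + b) * z) ^^ k) z = (a + b) ^ k * z" for z
    by (induction k) (simp_all add: mult.assoc)
  ultimately show ?thesis by simp
qed

definition ad :: "'a::ring \<Rightarrow> 'a \<Rightarrow> 'a" where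
  "ad a x = a * x - x * a"

lemma funpow_ad:
  fixes a x :: "'a::ring_1"
  shows "(ad a ^^ k) x = (\<Sum>i\<le>k. of_nat (k choose i) * ((- 1) ^ i * a ^ (k - i) * x * a ^ i))"
proof -
  have "(ad a ^^ k) ((- 1) ^ 0 * a ^ 0 * x * a ^ 0)
      = (\<Sum>i\<le>k. of_nat (k choose i) * ((- 1) ^ i * a ^ (k - i) * x * a ^ i))"
  proof (rule funpow_pascal)
    fix i j :: nat
    have "a * (- 1) ^ j = (- 1) ^ j * (a :: 'a)"
      by (metis mult_minus1 mult_minus1_right power_commuting_commutes)
    then have "a * ((- 1) ^ j * a ^ i * x * a ^ j) = (- 1) ^ j * a ^ Suc i * x * a ^ j"
      by (simp add: mult.assoc[symmetric])
    moreover have "(- 1) ^ j * a ^ i * x * a ^ j * a = - ((- 1) ^ Suc j * a ^ i * x * a ^ Suc j)"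
      by (simp add: mult.assoc power_commutes)
    ultimately show "ad a ((- 1) ^ j * a ^ i * x * a ^ j)
        = (- 1) ^ j * a ^ Suc i * x * a ^ j + (- 1) ^ Suc j * a ^ i * x * a ^ Suc j"
      by (simp add: ad_def)
  next
    fix c :: nat and z :: 'a
    show "ad a (of_nat c * z) = of_nat c * ad a z"
      by (simp add: ad_def right_diff_distrib mult.assoc) (metis mult.assoc mult_of_nat_commute)
  qed (simp add: ad_def algebra_simps)
  then show ?thesis by simp
qed

lemma sum_atMost_ends:
  fixes f :: "nat \<Rightarrow> 'a::comm_monoid_add"
  assumes "0 < m" "\<And>i. 0 < i \<Longrightarrow> i < m \<Longrightarrow> f i = 0"
  shows "(\<Sum>i\<le>m. f i) = f 0 + f m"
proof -
  have "(\<Sum>i\<le>m. f i) = (\<Sum>i\<in>{0, m}. f i)"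
    by (rule sum.mono_neutral_right) (use assms in auto)
  then show ?thesis using assms(1) by simp
qed

context
  fixes m :: nat
  assumes m_pos: "0 < m"
    and binomials_vanish: "\<And>j. 0 < j \<Longrightarrow> j < m \<Longrightarrow> of_nat (m choose j) = (0 :: 'a::ring_1)"
begin

lemma power_add_commuting:
  fixes a b :: 'a
  assumes "a * b = b * a"
  shows "(a + b) ^ m = a ^ m + b ^ m"
  using binomial_commuting[OF assms, of m] m_pos by (simp add: sum_atMost_ends binomials_vanish)

lemma minus_one_power: "(- 1 :: 'a) ^ m = - 1"
proof -
  have "0 = 1 + (- 1 :: 'a) ^ m" using power_add_commuting[of 1 "- 1"] m_pos by (simp add: power_0_left)
  then show ?thesis by (metis add.commute eq_neg_iff_add_eq_0)
qed

lemma funpow_ad_eq_ad_power: "(ad a ^^ m) x = ad (a ^ m) (x :: 'a)"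
  using m_pos by (simp add: funpow_ad sum_atMost_ends binomials_vanish minus_one_power ad_def)

end

section \<open>Evaluating polynomials in a division algebra\<close>

lemma algebra_map_central: "algebra_map \<phi> \<Longrightarrow> \<phi> c \<in> center"
  unfolding algebra_map_def centralizer_def by blast

lemma algebra_map_nonzero:
  assumes "algebra_map (\<phi> :: 'f::field \<Rightarrow> 'r::ring_1)" "c \<noteq> 0"
  shows "\<phi> c \<noteq> 0"
proof
  assume "\<phi> c = 0"
  then have "\<phi> (c * inverse c) = 0" using assms(1) by (simp add: algebra_map_def)
  then show False using assms by (simp add: algebra_map_def)
qed

lemma alg_eval_conjugate:
  fixes \<phi> :: "'f::field \<Rightarrow> 'r::division_ring"
  assumes "algebra_map \<phi>" "u \<noteq> 0"
  shows "alg_eval \<phi> p (inverse u * y * u) = inverse u * alg_eval \<phi> p y * u"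
proof -
  have "u * (inverse u * y * u) = y * u" using assms(2) by (simp add: mult.assoc[symmetric])
  then have "(inverse u * y * u) ^ i = inverse u * y ^ i * u" for i
    using power_intertwine[of u] assms(2) by (metis mult.assoc left_inverse mult_1)
  moreover have "\<phi> c * inverse u = inverse u * \<phi> c" for c
    using algebra_map_central[OF assms(1)] by (simp add: centerD)
  ultimately show ?thesis
    by (simp add: alg_eval_def sum_distrib_left sum_distrib_right mult.assoc[symmetric])
qed

lemma alg_eval_central_mult:
  fixes \<phi> :: "'f::field \<Rightarrow> 'r::ring_1"
  assumes "algebra_map \<phi>" "t \<in> center"
  shows "alg_eval \<phi> p (t * y) = (\<Sum>i\<le>degree p. t ^ i * (\<phi> (coeff p i) * y ^ i))"
proof -
  have "(t * y) ^ i = t ^ i * y ^ i" for i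
  proof (induction i)
    case (Suc i)
    have "y * t ^ i = t ^ i * y" using centralizer_power[OF assms(2)] by (simp add: centerD)
    then show ?case using Suc by (simp add: mult.assoc) (simp add: mult.assoc[symmetric])
  qed simp
  moreover have "\<phi> c * t ^ i = t ^ i * \<phi> c" for c i
    using centerD[OF algebra_map_central[OF assms(1)]] by blast
  ultimately show ?thesis by (simp add: alg_eval_def mult.assoc[symmetric])
qed

lemma power_degree_central_recurrence:
  fixes \<phi> :: "'f::field \<Rightarrow> 'r::division_ring"
  assumes "algebra_map \<phi>" "0 < degree p" "alg_eval \<phi> p y \<in> center"
  shows "\<exists>e. (\<forall>i. e i \<in> center) \<and> y ^ degree p = (\<Sum>i<degree p. e i * y ^ i)"
proof -
  define n where "n = degree p"
  define c where "c i = \<phi> (coeff p i)" for i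
  define g where "g = alg_eval \<phi> p y"
  define e where "e i = inverse (c n) * ((if i = 0 then g else 0) - c i)" for i
  have c: "c i \<in> center" for i using algebra_map_central[OF assms(1)] by (simp add: c_def)
  have "0 < n" using assms(2) by (simp add: n_def)
  have "coeff p n \<noteq> 0" using assms(2) by (auto simp: n_def)
  then have "c n \<noteq> 0" using algebra_map_nonzero[OF assms(1)] by (simp add: c_def)
  have "g = (\<Sum>i<n. c i * y ^ i) + c n * y ^ n"
    by (simp add: g_def alg_eval_def c_def n_def lessThan_Suc_atMost[symmetric])
  moreover have "g = (\<Sum>i<n. (if i = 0 then g else 0) * y ^ i)"
    using \<open>0 < n\<close> by (cases n) (simp_all add: sum.lessThan_Suc_shift del: sum.lessThan_Suc)
  ultimately have "c n * y ^ n = (\<Sum>i<n. ((if i = 0 then g else 0) - c i) * y ^ i)"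
    by (simp add: sum_subtractf algebra_simps)
  then have "inverse (c n) * (c n * y ^ n) = (\<Sum>i<n. e i * y ^ i)"
    by (simp add: e_def sum_distrib_left mult.assoc)
  then have "y ^ n = (\<Sum>i<n. e i * y ^ i)"
    using \<open>c n \<noteq> 0\<close> by (simp add: mult.assoc[symmetric])
  moreover have "e i \<in> center" for i
    using c assms(3) by (auto simp: e_def g_def)
  ultimately show ?thesis by (auto simp: n_def)
qed

lemma alg_eval_central_if_cyclic:
  fixes \<phi> :: "'f::field \<Rightarrow> 'r::division_ring"
  assumes "algebra_map \<phi>" "\<And>s t. alg_eval \<phi> p (s * t) = alg_eval \<phi> p (t * s)"
  shows "alg_eval \<phi> p y \<in> center"
proof (rule centralizerI)
  fix x :: 'r
  show "alg_eval \<phi> p y * x = x * alg_eval \<phi> p y"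
  proof (cases "x = 0")
    case False
    have "alg_eval \<phi> p y = alg_eval \<phi> p (x * (inverse x * y))"
      using False by (simp add: mult.assoc[symmetric])
    also have "\<dots> = alg_eval \<phi> p (inverse x * y * x)" by (rule assms(2))
    also have "\<dots> = inverse x * alg_eval \<phi> p y * x" by (rule alg_eval_conjugate[OF assms(1) False])
    finally have "x * alg_eval \<phi> p y = x * inverse x * alg_eval \<phi> p y * x"
      by (simp add: mult.assoc)
    then show ?thesis using False by simp
  qed simp
qed

section \<open>Division rings with infinite center\<close>

lemma central_power_sum_diff_factor:
  fixes w :: "nat \<Rightarrow> 'a::ring_1"
  assumes \<mu>: "\<mu> \<in> center"
  shows "\<exists>v. v m = w (Suc m) \<and> (\<forall>t\<in>center.
    (\<Sum>i\<le>Suc m. t ^ i * w i) - (\<Sum>i\<le>Suc m. \<mu> ^ i * w i) = (t - \<mu>) * (\<Sum>i\<le>m. t ^ i * v i))"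
proof (induction m arbitrary: w)
  case 0
  show ?case by (intro exI[of _ "\<lambda>_. w 1"]) (simp add: algebra_simps)
next
  case (Suc m)
  obtain v' where v': "\<And>t. t \<in> center \<Longrightarrow>
      (\<Sum>i\<le>Suc m. t ^ i * w (Suc i)) - (\<Sum>i\<le>Suc m. \<mu> ^ i * w (Suc i)) = (t - \<mu>) * (\<Sum>i\<le>m. t ^ i * v' i)"
    using Suc[of "\<lambda>i. w (Suc i)"] by blast
  define v where "v i = w (Suc i) + (if i \<le> m then \<mu> * v' i else 0)" for i
  have "(\<Sum>i\<le>Suc (Suc m). t ^ i * w i) - (\<Sum>i\<le>Suc (Suc m). \<mu> ^ i * w i)
      = (t - \<mu>) * (\<Sum>i\<le>Suc m. t ^ i * v i)" if t: "t \<in> center" for t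
  proof -
    define A where "A x = (\<Sum>i\<le>Suc m. x ^ i * w (Suc i))" for x
    define B where "B = (\<Sum>i\<le>m. t ^ i * v' i)"
    have shift: "(\<Sum>i\<le>Suc (Suc m). x ^ i * w i) = w 0 + x * A x" for x
      unfolding A_def by (subst sum.atMost_Suc_shift) (simp add: sum_distrib_left mult.assoc del: sum.atMost_Suc)
    have "\<mu> * (t ^ i * v' i) = t ^ i * (\<mu> * v' i)" for i
      using centerD[OF \<mu>, of "t ^ i"] by (simp add: mult.assoc[symmetric])
    then have "\<mu> * B = (\<Sum>i\<le>m. t ^ i * (\<mu> * v' i))"
      unfolding B_def sum_distrib_left by simp
    then have sum_v: "A t + \<mu> * B = (\<Sum>i\<le>Suc m. t ^ i * v i)"
      by (simp add: A_def v_def distrib_left sum.distrib del: sum.atMost_Suc) simp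
    have "(\<Sum>i\<le>Suc (Suc m). t ^ i * w i) - (\<Sum>i\<le>Suc (Suc m). \<mu> ^ i * w i) = t * A t - \<mu> * A \<mu>"
      by (simp only: shift) simp
    also have "\<dots> = (t - \<mu>) * A t + \<mu> * (A t - A \<mu>)"
      by (simp add: algebra_simps)
    also have "\<mu> * (A t - A \<mu>) = (t - \<mu>) * (\<mu> * B)"
      using v'[OF t] centerD[OF \<mu>, of "t - \<mu>"] by (simp add: A_def B_def mult.assoc[symmetric])
    finally show ?thesis by (simp only: sum_v distrib_left[symmetric])
  qed
  moreover have "v (Suc m) = w (Suc (Suc m))" by (simp add: v_def)
  ultimately show ?case by blast
qed

lemma coeffs_zero_if_infinitely_many_central_roots:
  fixes w :: "nat \<Rightarrow> 'a::division_ring"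
  assumes "T \<subseteq> center" "infinite T" "\<And>t. t \<in> T \<Longrightarrow> (\<Sum>i\<le>m. t ^ i * w i) = 0" "i \<le> m"
  shows "w i = 0"
  using assms
proof (induction m arbitrary: w T i)
  case 0
  then obtain t where "t \<in> T" by (metis ex_in_conv finite.emptyI)
  then show ?case using 0 by auto
next
  case (Suc m)
  obtain \<mu> where \<mu>: "\<mu> \<in> T" using Suc.prems(2) by (metis ex_in_conv finite.emptyI)
  obtain v where v_last: "v m = w (Suc m)" and v: "\<And>t. t \<in> center \<Longrightarrow>
      (\<Sum>i\<le>Suc m. t ^ i * w i) - (\<Sum>i\<le>Suc m. \<mu> ^ i * w i) = (t - \<mu>) * (\<Sum>i\<le>m. t ^ i * v i)"
    using central_power_sum_diff_factor[of \<mu> m w] \<mu> Suc.prems(1) by blast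
  have "(\<Sum>i\<le>m. t ^ i * v i) = 0" if "t \<in> T - {\<mu>}" for t
    using v[of t] that \<mu> Suc.prems(1,3) by auto
  then have "w (Suc m) = 0"
    using Suc.IH[of "T - {\<mu>}" v m] Suc.prems(1,2) v_last by auto
  then have "\<And>t. t \<in> T \<Longrightarrow> (\<Sum>i\<le>m. t ^ i * w i) = 0" using Suc.prems(3) by simp
  then show ?case
    using Suc.IH[of T w] Suc.prems(1,2,4) \<open>w (Suc m) = 0\<close> by (cases "i = Suc m") auto
qed

lemma coeffs_central_if_central_values:
  fixes u :: "nat \<Rightarrow> 'a::division_ring"
  assumes "infinite (center :: 'a set)" "\<And>t. t \<in> center \<Longrightarrow> (\<Sum>i\<le>m. t ^ i * u i) \<in> center" "i \<le> m"
  shows "u i \<in> center"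
proof (rule centralizerI)
  fix x :: 'a
  have "(\<Sum>i\<le>m. t ^ i * (u i * x - x * u i)) = 0" if "t \<in> center" for t
  proof -
    have "t ^ i * (u i * x - x * u i) = t ^ i * u i * x - x * (t ^ i * u i)" for i
      using centerD[OF centralizer_power[where k = i, OF that], of x]
      by (simp add: right_diff_distrib mult.assoc) (simp add: mult.assoc[symmetric])
    then show ?thesis
      using centerD[OF assms(2)[OF that], of x]
      by (simp add: sum_subtractf sum_distrib_left sum_distrib_right)
  qed
  then show "u i * x = x * u i"
    using coeffs_zero_if_infinitely_many_central_roots[where T = center and m = m and i = i
        and w = "\<lambda>i. u i * x - x * u i"] assms(1,3) by simp
qed

lemma power_degree_central_if_alg_eval_central:
  fixes \<phi> :: "'f::field \<Rightarrow> 'r::division_ring" and y :: 'r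
  assumes "algebra_map \<phi>" "infinite (center :: 'r set)" "\<And>y. alg_eval \<phi> p y \<in> center"
  shows "y ^ degree p \<in> center"
proof (cases "p = 0")
  case False
  have "(\<Sum>i\<le>degree p. t ^ i * (\<phi> (coeff p i) * y ^ i)) \<in> center" if "t \<in> center" for t
    using alg_eval_central_mult[OF assms(1) that, of p y] assms(3)[of "t * y"] by simp
  then have "\<phi> (coeff p (degree p)) * y ^ degree p \<in> center"
    using assms(2) by (intro coeffs_central_if_central_values[where u = "\<lambda>i. \<phi> (coeff p i) * y ^ i"]) auto
  moreover have "\<phi> (coeff p (degree p)) \<noteq> 0" using False algebra_map_nonzero[OF assms(1)] by simp
  ultimately show ?thesis
    using algebra_map_central[OF assms(1)] by (blast intro: centralizer_mult_cancel_left)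
qed simp

lemma binomials_vanish_if_least_central_power:
  assumes inf: "infinite (center :: 'a::division_ring set)"
    and central: "\<And>y :: 'a. y ^ m \<in> center"
    and least: "\<And>j. 0 < j \<Longrightarrow> j < m \<Longrightarrow> \<exists>y :: 'a. y ^ j \<notin> center"
    and j: "0 < j" "j < m"
  shows "of_nat (m choose j) = (0 :: 'a)"
proof (rule ccontr)
  assume nonzero: "of_nat (m choose j) \<noteq> (0 :: 'a)"
  have "y ^ j \<in> center" for y :: 'a
  proof -
    have sum_central: "(\<Sum>i\<le>m. t ^ i * (of_nat (m choose i) * y ^ (m - i))) \<in> center"
      if t: "t \<in> center" for t
    proof -
      have "(y + t) ^ m = (\<Sum>i\<le>m. of_nat (m choose i) * (y ^ (m - i) * t ^ i))"
        using centerD[OF t] by (intro binomial_commuting) simp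
      also have "\<dots> = (\<Sum>i\<le>m. t ^ i * (of_nat (m choose i) * y ^ (m - i)))"
      proof (rule sum.cong)
        fix i
        show "of_nat (m choose i) * (y ^ (m - i) * t ^ i) = t ^ i * (of_nat (m choose i) * y ^ (m - i))"
          using centerD[OF centralizer_power[where k = i, OF t], of "of_nat (m choose i) * y ^ (m - i)"]
          by (simp add: mult.assoc)
      qed simp
      finally show ?thesis using central[of "y + t"] by simp
    qed
    have "of_nat (m choose (m - j)) * y ^ (m - (m - j)) \<in> center"
      using coeffs_central_if_central_values[where u = "\<lambda>i. of_nat (m choose i) * y ^ (m - i)"
          and m = m and i = "m - j", OF inf sum_central] by simp
    moreover have "m choose (m - j) = m choose j" "m - (m - j) = j"
      using j binomial_symmetric[of j m] by simp_all
    ultimately have "of_nat (m choose j) * y ^ j \<in> center" by simp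
    then show ?thesis by (rule centralizer_mult_cancel_left[OF of_nat_in_centralizer nonzero])
  qed
  then show False using least[OF j] by blast
qed

lemma exists_ad_eq_one:
  fixes a b :: "'a::division_ring"
  assumes "(ad a ^^ m) b = 0" "ad a b \<noteq> 0"
  shows "\<exists>w. ad a w = 1"
proof -
  have "m \<noteq> 0" using assms by (cases m) (auto simp: ad_def)
  then obtain k where k: "(ad a ^^ Suc k) b \<noteq> 0" "(ad a ^^ Suc (Suc k)) b = 0"
    using ex_least_nat_less[of "\<lambda>k. (ad a ^^ Suc k) b = 0" "m - 1"] assms by auto
  define c where "c = (ad a ^^ k) b"
  define d where "d = ad a c"
  have "d \<noteq> 0" "ad a d = 0" using k by (simp_all add: c_def d_def)
  then have "a * inverse d = inverse d * a"
    by (simp add: ad_def mult_commute_imp_mult_inverse_commute)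
  then have "ad a (inverse d * c) = inverse d * d"
    by (simp add: ad_def d_def right_diff_distrib mult.assoc[symmetric])
  then show ?thesis using \<open>d \<noteq> 0\<close> by auto
qed

text \<open>If \<open>ad a\<close> is nilpotent and \<open>a\<close> is not central, some \<open>v\<close> satisfies \<open>a v a\<inverse> = v + 1\<close>;
  for central \<open>m\<close>-th powers this contradicts \<open>(v + 1)\<^sup>m = v\<^sup>m + 1\<close>.\<close>

lemma commute_if_central_power_binomials_vanish:
  fixes a b :: "'a::division_ring"
  assumes m: "0 < m" and binomials: "\<And>j. 0 < j \<Longrightarrow> j < m \<Longrightarrow> of_nat (m choose j) = (0 :: 'a)"
    and central: "\<And>y :: 'a. y ^ m \<in> center"
  shows "a * b = b * a"
proof (rule ccontr)
  assume "a * b \<noteq> b * a"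
  then have "ad a b \<noteq> 0" by (simp add: ad_def)
  moreover have "(ad a ^^ m) b = 0"
    using funpow_ad_eq_ad_power[OF m binomials] centerD[OF central] by (simp add: ad_def)
  ultimately obtain w where "ad a w = 1" using exists_ad_eq_one[where a = a and m = m and b = b] by auto
  then have "a * w = w * a + 1" by (simp add: ad_def diff_eq_eq)
  then have "a * (w * a) = (w * a + 1) * a" by (simp add: mult.assoc[symmetric])
  then have "a * (w * a) ^ m = (w * a + 1) ^ m * a" by (rule power_intertwine)
  also have "(w * a + 1) ^ m = (w * a) ^ m + 1"
    using power_add_commuting[OF m binomials] by simp
  finally have "a = 0" using centerD[OF central] by (simp add: distrib_right)
  then show False using \<open>a * b \<noteq> b * a\<close> by simp
qed

theorem commute_if_infinite_center:
  fixes a b :: "'a::division_ring"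
  assumes "infinite (center :: 'a set)" "0 < n" "\<And>y :: 'a. y ^ n \<in> center"
  shows "a * b = b * a"
proof -
  obtain m where m: "0 < m" "\<And>y :: 'a. y ^ m \<in> center"
    and least: "\<And>j. 0 < j \<Longrightarrow> j < m \<Longrightarrow> \<exists>y :: 'a. y ^ j \<notin> center"
    using ex_least_nat_le[of "\<lambda>m. 0 < m \<and> (\<forall>y :: 'a. y ^ m \<in> center)" n] assms(2,3) by blast
  show ?thesis
    using binomials_vanish_if_least_central_power[OF assms(1) m(2) least]
    by (intro commute_if_central_power_binomials_vanish[OF m(1) _ m(2)]) auto
qed

section \<open>Division rings in which every element has finite order\<close>

lemma exists_least_power_eq_one:
  fixes a :: "'a::division_ring"
  assumes "a \<noteq> 0" "finite (range (\<lambda>k. a ^ k))"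
  shows "\<exists>M. 0 < M \<and> a ^ M = 1 \<and> (\<forall>k. 0 < k \<longrightarrow> k < M \<longrightarrow> a ^ k \<noteq> 1)"
proof -
  have "\<not> inj (\<lambda>k. a ^ k)" using finite_imageD[OF assms(2)] by auto
  then obtain i j where "i \<noteq> j" "a ^ i = a ^ j" unfolding inj_def by blast
  then obtain i j where "i < j" "a ^ i = a ^ j" by (metis linorder_neqE_nat)
  moreover have "a ^ i * a ^ (j - i) = a ^ j" using \<open>i < j\<close> by (simp flip: power_add)
  ultimately have "a ^ (j - i) = 1" using assms(1) by (metis mult_cancel_left1 power_not_zero)
  then show ?thesis
    using ex_least_nat_le[of "\<lambda>M. 0 < M \<and> a ^ M = 1" "j - i"] \<open>i < j\<close> by auto
qed

lemma CHAR_pos_if_finite_powers: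
  assumes "\<And>y :: 'a::division_ring. finite (range (\<lambda>k. y ^ k))"
  shows "0 < CHAR('a)"
proof (cases "(2 :: 'a) = 0")
  case True
  then have "of_nat 2 = (0 :: 'a)" by simp
  then show ?thesis unfolding CHAR_pos_iff by (intro exI[of _ 2]) simp
next
  case False
  then obtain M where "0 < M" "(2 :: 'a) ^ M = 1" using exists_least_power_eq_one[OF False assms] by blast
  then have "of_nat (2 ^ M - 1) = (0 :: 'a)" by simp
  moreover have "0 < (2 :: nat) ^ M - 1" using \<open>0 < M\<close> one_less_power[of "2 :: nat" M] by simp
  ultimately show ?thesis unfolding CHAR_pos_iff by blast
qed

lemma prime_CHAR_division_ring:
  assumes "0 < CHAR('a::division_ring)"
  shows "prime CHAR('a)"
  unfolding prime_nat_iff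
proof (intro conjI allI impI)
  show "1 < CHAR('a)" using assms CHAR_not_1[where 'a = 'a] by linarith
  fix m assume "m dvd CHAR('a)"
  then obtain k where k: "CHAR('a) = m * k" by (rule dvdE)
  then have "(of_nat m :: 'a) * of_nat k = 0" by (metis of_nat_CHAR of_nat_mult)
  then consider "CHAR('a) dvd m" | "CHAR('a) dvd k" by (auto simp: of_nat_eq_0_iff_char_dvd)
  then show "m = 1 \<or> m = CHAR('a)"
  proof cases
    case 1
    then show ?thesis using k by (simp add: dvd_antisym)
  next
    case 2
    then have "k = CHAR('a)" using k by (simp add: dvd_antisym)
    then show ?thesis using k assms by simp
  qed
qed

lemma binomials_vanish_CHAR:
  assumes "prime CHAR('a::semiring_1)" "0 < j" "j < CHAR('a)"
  shows "of_nat (CHAR('a) choose j) = (0 :: 'a)"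
  using assms dvd_choose_prime[of j "CHAR('a)"] by (simp add: of_nat_eq_0_iff_char_dvd)

lemma of_nat_order_nonzero:
  fixes a :: "'a::division_ring"
  assumes "prime CHAR('a)" "0 < M" "a ^ M = 1" "\<And>k. 0 < k \<Longrightarrow> k < M \<Longrightarrow> a ^ k \<noteq> 1"
  shows "of_nat M \<noteq> (0 :: 'a)"
proof
  let ?p = "CHAR('a)"
  assume "of_nat M = (0 :: 'a)"
  then obtain t where t: "M = ?p * t" by (auto simp: of_nat_eq_0_iff_char_dvd)
  have p: "1 < ?p" using assms(1) prime_gt_1_nat by blast
  then have "0 < t" "t < M" using t assms(2) by auto
  have vanish: "\<And>j. 0 < j \<Longrightarrow> j < ?p \<Longrightarrow> of_nat (?p choose j) = (0 :: 'a)"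
    by (rule binomials_vanish_CHAR[OF assms(1)])
  have "(a ^ t + - 1) ^ ?p = (a ^ t) ^ ?p + (- 1) ^ ?p"
    using p by (intro power_add_commuting[OF _ vanish]) auto
  also have "(a ^ t) ^ ?p = 1" using assms(3) t by (simp add: power_mult[symmetric] mult.commute)
  also have "(- 1 :: 'a) ^ ?p = - 1" using p by (intro minus_one_power[OF _ vanish]) auto
  finally have "a ^ t = 1" by simp
  then show False using assms(4) \<open>0 < t\<close> \<open>t < M\<close> by blast
qed

lemma geometric_sum_root_of_unity:
  fixes h :: "'a::division_ring"
  assumes "h ^ M = 1" "h \<noteq> 1"
  shows "(\<Sum>j<M. h ^ j) = 0"
proof -
  have "(h - 1) * (\<Sum>j<M. h ^ j) = h ^ M - 1"
    by (induction M) (simp_all add: algebra_simps)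
  then show ?thesis using assms by simp
qed

definition fourier_component :: "'a::division_ring \<Rightarrow> nat \<Rightarrow> 'a \<Rightarrow> nat \<Rightarrow> 'a" where
  "fourier_component a M v j = (\<Sum>i<M. inverse (a ^ (i * j)) * v * a ^ i)"

lemma fourier_component_twisted:
  fixes a :: "'a::division_ring"
  assumes "a ^ M = 1" "a \<noteq> 0"
  shows "fourier_component a M v j * a = a ^ j * fourier_component a M v j"
proof -
  define f where "f i = inverse (a ^ (i * j)) * v * a ^ i" for i
  have "f i * a = a ^ j * f (Suc i)" for i
  proof -
    have "a ^ (Suc i * j) = a ^ (i * j) * a ^ j" by (simp add: power_add[symmetric] add.commute)
    then have key: "inverse (a ^ (i * j)) = a ^ j * inverse (a ^ (Suc i * j))"
      using assms(2) by (simp add: nonzero_inverse_mult_distrib mult.assoc[symmetric])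
    have "f i * a = inverse (a ^ (i * j)) * v * a ^ Suc i"
      by (simp add: f_def mult.assoc power_commutes)
    also have "\<dots> = a ^ j * f (Suc i)"
      by (simp only: key f_def mult.assoc)
    finally show ?thesis .
  qed
  then have "fourier_component a M v j * a = a ^ j * (\<Sum>i<M. f (Suc i))"
    by (simp add: fourier_component_def f_def sum_distrib_left sum_distrib_right)
  also have "(\<Sum>i<M. f (Suc i)) = (\<Sum>i<M. f i)"
    using sum.lessThan_Suc_shift[of f M] assms(1) by (simp add: f_def power_mult)
  finally show ?thesis by (simp add: fourier_component_def f_def)
qed

lemma sum_fourier_components:
  fixes a :: "'a::division_ring"
  assumes "a ^ M = 1" "\<And>k. 0 < k \<Longrightarrow> k < M \<Longrightarrow> a ^ k \<noteq> 1" "0 < M"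
  shows "(\<Sum>j<M. fourier_component a M v j) = of_nat M * v"
proof -
  have orthogonal: "(\<Sum>j<M. inverse (a ^ (i * j))) = 0" if "0 < i" "i < M" for i
  proof -
    have "(a ^ i) ^ M = 1" using assms(1) by (metis mult.commute power_mult power_one)
    then have "inverse (a ^ i) ^ M = 1" by (simp add: power_inverse)
    moreover have "inverse (a ^ i) \<noteq> 1" using assms(2)[OF that] by (metis inverse_1 inverse_inverse_eq)
    ultimately have "(\<Sum>j<M. inverse (a ^ i) ^ j) = 0" by (rule geometric_sum_root_of_unity)
    then show ?thesis by (simp add: power_mult power_inverse)
  qed
  have "(\<Sum>j<M. fourier_component a M v j) = (\<Sum>i<M. (\<Sum>j<M. inverse (a ^ (i * j))) * (v * a ^ i))"
    unfolding fourier_component_def by (subst sum.swap) (simp add: sum_distrib_right mult.assoc)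
  also have "\<dots> = (\<Sum>i<M. if i = 0 then of_nat M * v else 0)"
    by (rule sum.cong) (auto simp: orthogonal)
  finally show ?thesis using assms(3) by simp
qed

text \<open>If only the Fourier component with \<open>j = 1\<close> were nonzero, \<open>M v\<close> would commute with \<open>a\<close>.\<close>

lemma exists_conjugation_eigenvector:
  fixes a v :: "'a::division_ring"
  assumes aM: "a ^ M = 1" and least: "\<And>k. 0 < k \<Longrightarrow> k < M \<Longrightarrow> a ^ k \<noteq> 1"
    and M: "of_nat M \<noteq> (0 :: 'a)" and va: "v * a \<noteq> a * v"
  shows "\<exists>x j. x \<noteq> 0 \<and> j < M \<and> j \<noteq> 1 \<and> x * a = a ^ j * x"
proof (rule ccontr)
  assume no: "\<not> ?thesis"
  have "M \<noteq> 0" using M by (metis of_nat_0)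
  have "a \<noteq> 0" using aM \<open>M \<noteq> 0\<close> by (auto simp: power_0_left)
  have "M \<noteq> 1" using aM va by auto
  note twisted = fourier_component_twisted[OF aM \<open>a \<noteq> 0\<close>, of v]
  have "fourier_component a M v j = 0" if "j < M" "j \<noteq> 1" for j
    using no twisted that by blast
  then have "(\<Sum>j<M. fourier_component a M v j) = (\<Sum>j<M. if j = 1 then fourier_component a M v 1 else 0)"
    by (intro sum.cong) auto
  then have "of_nat M * v = fourier_component a M v 1"
    using sum_fourier_components[OF aM least] \<open>M \<noteq> 0\<close> \<open>M \<noteq> 1\<close> by simp
  then have "of_nat M * v * a = a * (of_nat M * v)" using twisted[of 1] by simp
  then have "of_nat M * (v * a) = of_nat M * (a * v)"
    by (simp add: mult.assoc) (metis mult.assoc mult_of_nat_commute)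
  then show False using M va by simp
qed

inductive_set additive_closure :: "'a::ring_1 set \<Rightarrow> 'a set" for M :: "'a set" where
  additive_closure_zero: "0 \<in> additive_closure M"
| additive_closure_add: "m \<in> M \<Longrightarrow> s \<in> additive_closure M \<Longrightarrow> m + s \<in> additive_closure M"

lemma mem_additive_closure: "m \<in> M \<Longrightarrow> m \<in> additive_closure M"
  using additive_closure_add[OF _ additive_closure_zero] by simp

lemma additive_closure_add_closed:
  "s \<in> additive_closure M \<Longrightarrow> t \<in> additive_closure M \<Longrightarrow> s + t \<in> additive_closure M"
  by (induction rule: additive_closure.induct) (auto simp: add.assoc intro: additive_closure.intros)

lemma additive_closure_mult_closed:
  assumes M: "\<And>u v. u \<in> M \<Longrightarrow> v \<in> M \<Longrightarrow> u * v \<in> M"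
    and "s \<in> additive_closure M" "t \<in> additive_closure M"
  shows "s * t \<in> additive_closure M"
proof -
  have left: "u * w \<in> additive_closure M" if u: "u \<in> M" and w: "w \<in> additive_closure M" for u w
    using w by induction (auto simp: distrib_left M u intro: additive_closure.intros additive_closure_add_closed)
  from assms(2) show ?thesis
    by induction (auto simp: distrib_right left assms(3) intro: additive_closure.intros additive_closure_add_closed)
qed

lemma additive_closure_eq_combination:
  assumes "finite M" "s \<in> additive_closure M"
  shows "\<exists>c. s = (\<Sum>m\<in>M. of_nat (c m) * m)"
  using assms(2)
proof induction
  case additive_closure_zero
  show ?case by (intro exI[of _ "\<lambda>_. 0"]) simp
next
  case (additive_closure_add m s)
  then obtain c where c: "s = (\<Sum>m\<in>M. of_nat (c m) * m)" by blast
  have "(\<Sum>m'\<in>M - {m}. of_nat ((c(m := Suc (c m))) m') * m') = (\<Sum>m'\<in>M - {m}. of_nat (c m') * m')"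
    by (rule sum.cong) auto
  then have "m + s = (\<Sum>m'\<in>M. of_nat ((c(m := Suc (c m))) m') * m')"
    using additive_closure_add(1) assms(1) by (simp add: c sum.remove[of M m] distrib_right add.assoc)
  then show ?case by blast
qed

lemma finite_additive_closure:
  assumes "finite M" "0 < CHAR('a)"
  shows "finite (additive_closure (M :: 'a::ring_1 set))"
proof -
  let ?f = "\<lambda>c. \<Sum>m\<in>M. of_nat (c m) * m"
  have "additive_closure M \<subseteq> ?f ` (M \<rightarrow>\<^sub>E {..<CHAR('a)})"
  proof
    fix s assume "s \<in> additive_closure M"
    then obtain c where c: "s = ?f c" using additive_closure_eq_combination[OF assms(1)] by blast
    have "of_nat (c m) = (of_nat (CHAR('a) * (c m div CHAR('a)) + c m mod CHAR('a)) :: 'a)" for m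
      by simp
    then have "of_nat (c m mod CHAR('a)) = (of_nat (c m) :: 'a)" for m
      by (simp only: of_nat_add of_nat_mult of_nat_CHAR) simp
    then have "?f (restrict (\<lambda>m. c m mod CHAR('a)) M) = s" by (simp add: c)
    moreover have "restrict (\<lambda>m. c m mod CHAR('a)) M \<in> M \<rightarrow>\<^sub>E {..<CHAR('a)}" using assms(2) by auto
    ultimately show "s \<in> ?f ` (M \<rightarrow>\<^sub>E {..<CHAR('a)})" by blast
  qed
  moreover have "finite (?f ` (M \<rightarrow>\<^sub>E {..<CHAR('a)}))"
    using assms(1) by (intro finite_imageI finite_PiE) auto
  ultimately show ?thesis by (rule finite_subset)
qed

lemma finite_sub_division_ring_additive_closure:
  fixes M :: "'a::division_ring set"
  assumes "0 < CHAR('a)" "finite M" "1 \<in> M" "\<And>u v. u \<in> M \<Longrightarrow> v \<in> M \<Longrightarrow> u * v \<in> M"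
  shows "finite_sub_division_ring (additive_closure M)"
proof -
  let ?S = "additive_closure M"
  have finite: "finite ?S" by (rule finite_additive_closure[OF assms(2,1)])
  have mult: "s * t \<in> ?S" if "s \<in> ?S" "t \<in> ?S" for s t
    using additive_closure_mult_closed[OF assms(4)] that by blast
  have one: "1 \<in> ?S" using assms(3) by (rule mem_additive_closure)
  have power: "s ^ k \<in> ?S" if "s \<in> ?S" for s k
    using that by (induction k) (simp_all add: one mult)
  have "of_nat k \<in> ?S" for k
    by (induction k) (auto intro: additive_closure.intros assms(3))
  moreover have "(of_nat (CHAR('a) - 1) :: 'a) = - 1"
    using assms(1) of_nat_CHAR[where 'a = 'a] by (simp add: eq_neg_iff_add_eq_0)
  ultimately have minus_one: "- 1 \<in> ?S" by metis
  show ?thesis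
  proof unfold_locales
    fix s assume s: "s \<in> ?S"
    show "- s \<in> ?S" using mult[OF minus_one s] by simp
    show "inverse s \<in> ?S"
    proof (cases "s = 0")
      case False
      have "range (\<lambda>k. s ^ k) \<subseteq> ?S" using power s by blast
      then obtain k where "0 < k" "s ^ k = 1"
        using exists_least_power_eq_one[OF False] finite finite_subset by blast
      then have "inverse s = s ^ (k - 1)"
        by (intro inverse_unique) (simp flip: power_Suc)
      then show ?thesis using power s by simp
    qed (simp add: additive_closure_zero)
  qed (auto intro: additive_closure.intros additive_closure_add_closed mult one finite)
qed

lemma exists_finite_sub_division_ring_twisted:
  fixes a x :: "'a::division_ring"
  assumes "0 < CHAR('a)" "finite (range (\<lambda>k. a ^ k))" "finite (range (\<lambda>k. x ^ k))"
    and twisted: "x * a = a ^ j * x"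
  shows "\<exists>S. finite_sub_division_ring S \<and> a \<in> S \<and> x \<in> S"
proof -
  define M where "M = (\<lambda>(i, l). a ^ i * x ^ l) ` (UNIV :: (nat \<times> nat) set)"
  have "x ^ l * a = a ^ (j ^ l) * x ^ l" for l
  proof (induction l)
    case (Suc l)
    have "x ^ Suc l * a = x * (a ^ (j ^ l) * x ^ l)" by (simp add: mult.assoc Suc)
    also have "\<dots> = (a ^ j) ^ (j ^ l) * x ^ Suc l"
      using power_intertwine[OF twisted, of "j ^ l"] by (simp add: mult.assoc[symmetric])
    finally show ?case by (simp add: power_mult[symmetric] mult.commute)
  qed simp
  then have commute: "x ^ l * a ^ i = (a ^ (j ^ l)) ^ i * x ^ l" for i l
    by (rule power_intertwine)
  have "u * v \<in> M" if uv: "u \<in> M" "v \<in> M" for u v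
  proof -
    obtain i l i' l' where "u = a ^ i * x ^ l" "v = a ^ i' * x ^ l'" using uv by (auto simp: M_def)
    then have "u * v = a ^ i * (x ^ l * a ^ i') * x ^ l'" by (simp add: mult.assoc)
    also have "\<dots> = a ^ (i + j ^ l * i') * x ^ (l + l')"
      by (simp only: commute) (simp add: power_add power_mult mult.assoc)
    finally have "u * v = (\<lambda>(i, l). a ^ i * x ^ l) (i + j ^ l * i', l + l')" by simp
    then show ?thesis unfolding M_def by blast
  qed
  moreover have "finite M"
  proof -
    have "M \<subseteq> (\<lambda>(s, t). s * t) ` (range (\<lambda>k. a ^ k) \<times> range (\<lambda>k. x ^ k))"
      by (auto simp: M_def)
    then show ?thesis using assms(2,3) finite_subset by blast
  qed
  moreover have "1 \<in> M" "a \<in> M" "x \<in> M"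
    unfolding M_def by (auto intro: image_eqI[of _ _ "(0, 0)"] image_eqI[of _ _ "(1, 0)"] image_eqI[of _ _ "(0, 1)"])
  ultimately show ?thesis
    using finite_sub_division_ring_additive_closure[OF assms(1)] mem_additive_closure by blast
qed

theorem commute_if_finite_powers:
  fixes a b :: "'a::division_ring"
  assumes powers: "\<And>y :: 'a. finite (range (\<lambda>k. y ^ k))"
  shows "a * b = b * a"
proof (rule ccontr)
  assume ab: "a * b \<noteq> b * a"
  then have "a \<noteq> 0" by auto
  have char: "0 < CHAR('a)" "prime CHAR('a)"
    using CHAR_pos_if_finite_powers[OF powers] by (auto intro: prime_CHAR_division_ring)
  obtain M where M: "0 < M" "a ^ M = 1" and least: "\<And>k. 0 < k \<Longrightarrow> k < M \<Longrightarrow> a ^ k \<noteq> 1"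
    using exists_least_power_eq_one[OF \<open>a \<noteq> 0\<close> powers] by blast
  obtain x j where x: "x \<noteq> 0" "j < M" "j \<noteq> 1" "x * a = a ^ j * x"
    using exists_conjugation_eigenvector[OF M(2) least of_nat_order_nonzero[OF char(2) M least], of b] ab
    by auto
  then obtain S where "finite_sub_division_ring S" "a \<in> S" "x \<in> S"
    using exists_finite_sub_division_ring_twisted[OF char(1) powers powers] by blast
  then have "a ^ j * x = a * x" using x(4) finite_sub_division_ring.mult_commute by metis
  then have "a ^ j = a" using x(1) by simp
  show False
  proof (cases j)
    case 0
    then show False using \<open>a ^ j = a\<close> ab by simp
  next
    case (Suc i)
    then have "a ^ i * a = 1 * a" using \<open>a ^ j = a\<close> by (simp add: power_Suc2)
    then have "a ^ i = 1" using \<open>a \<noteq> 0\<close> by (simp only: mult_cancel_right) simp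
    then show False using least[of i] Suc x(2,3) by simp
  qed
qed

definition central_combinations :: "'a::ring_1 \<Rightarrow> nat \<Rightarrow> 'a set" where
  "central_combinations y n = {s. \<exists>z. (\<forall>i. z i \<in> center) \<and> s = (\<Sum>i<n. z i * y ^ i)}"

lemma finite_central_combinations:
  assumes "finite (center :: 'a::ring_1 set)"
  shows "finite (central_combinations (y :: 'a) n)"
proof -
  have "central_combinations y n \<subseteq> (\<lambda>z. \<Sum>i<n. z i * y ^ i) ` ({..<n} \<rightarrow>\<^sub>E center)"
  proof
    fix s assume "s \<in> central_combinations y n"
    then obtain z where z: "\<forall>i. z i \<in> center" "s = (\<Sum>i<n. z i * y ^ i)"
      by (auto simp: central_combinations_def)
    then have "s = (\<Sum>i<n. restrict z {..<n} i * y ^ i)" by simp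
    moreover have "restrict z {..<n} \<in> {..<n} \<rightarrow>\<^sub>E center" using z(1) by auto
    ultimately show "s \<in> (\<lambda>z. \<Sum>i<n. z i * y ^ i) ` ({..<n} \<rightarrow>\<^sub>E center)" by blast
  qed
  moreover have "finite ((\<lambda>z. \<Sum>i<n. z i * y ^ i) ` ({..<n} \<rightarrow>\<^sub>E center))"
    using assms by (intro finite_imageI finite_PiE) auto
  ultimately show ?thesis by (rule finite_subset)
qed

lemma central_combinations_mult_closed:
  fixes y :: "'a::ring_1"
  assumes "0 < n" "\<And>i. e i \<in> center" and recurrence: "y ^ n = (\<Sum>i<n. e i * y ^ i)"
    and "s \<in> central_combinations y n"
  shows "s * y \<in> central_combinations y n"
proof -
  obtain z where z: "\<And>i. z i \<in> center" "s = (\<Sum>i<n. z i * y ^ i)"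
    using assms(4) by (auto simp: central_combinations_def)
  obtain n' where n': "n = Suc n'" using assms(1) by (cases n) auto
  define z' where "z' i = (case i of 0 \<Rightarrow> 0 | Suc k \<Rightarrow> z k) + z n' * e i" for i
  have "s * y = (\<Sum>i<n'. z i * y ^ Suc i) + z n' * y ^ n"
    by (simp add: z(2) n' sum_distrib_right distrib_right mult.assoc power_commutes)
  also have "(\<Sum>i<n'. z i * y ^ Suc i) = (\<Sum>i<n. (case i of 0 \<Rightarrow> 0 | Suc k \<Rightarrow> z k) * y ^ i)"
    by (simp add: n' sum.lessThan_Suc_shift del: sum.lessThan_Suc)
  also have "z n' * y ^ n = (\<Sum>i<n. (z n' * e i) * y ^ i)"
    by (simp add: recurrence sum_distrib_left mult.assoc)
  finally have "s * y = (\<Sum>i<n. z' i * y ^ i)" by (simp add: z'_def distrib_right sum.distrib)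
  moreover have "z' i \<in> center" for i
    using z(1) assms(2) by (auto simp: z'_def split: nat.split)
  ultimately show ?thesis by (auto simp: central_combinations_def)
qed

lemma finite_powers_if_central_recurrence:
  fixes y :: "'a::ring_1"
  assumes "finite (center :: 'a set)" "0 < n" "\<And>i. e i \<in> center"
    and "y ^ n = (\<Sum>i<n. e i * y ^ i)"
  shows "finite (range (\<lambda>k. y ^ k))"
proof -
  have "1 \<in> central_combinations y n"
    unfolding central_combinations_def using assms(2)
    by (intro CollectI exI[of _ "\<lambda>i. if i = 0 then 1 else 0"])
      (cases n, auto simp: sum.lessThan_Suc_shift simp del: sum.lessThan_Suc)
  then have "y ^ k \<in> central_combinations y n" for k
    using central_combinations_mult_closed[OF assms(2-4)]
    by (induction k) (simp_all add: power_Suc2 del: power_Suc)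
  then have "range (\<lambda>k. y ^ k) \<subseteq> central_combinations y n" by blast
  then show ?thesis using finite_central_combinations[OF assms(1)] by (rule finite_subset)
qed

section \<open>Division algebras with central polynomial values\<close>

theorem commute_if_alg_eval_central:
  fixes \<phi> :: "'f::field \<Rightarrow> 'r::division_ring" and a b :: 'r
  assumes "algebra_map \<phi>" "0 < degree p" "\<And>y. alg_eval \<phi> p y \<in> center"
  shows "a * b = b * a"
proof (cases "finite (center :: 'r set)")
  case True
  have "finite (range (\<lambda>k. y ^ k))" for y :: 'r
    using power_degree_central_recurrence[OF assms(1,2,3)] True assms(2)
    by (blast intro: finite_powers_if_central_recurrence)
  then show ?thesis by (rule commute_if_finite_powers)
next
  case False
  then show ?thesis
    using assms(2) power_degree_central_if_alg_eval_central[OF assms(1) False assms(3)]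
    by (rule commute_if_infinite_center)
qed

theorem theorem2p2:
  fixes \<phi> :: "'f::field \<Rightarrow> 'r::division_ring" and p :: "'f poly"
  assumes "algebra_map \<phi>"
    and "\<exists>a b :: 'r. a * b \<noteq> b * a"
    and "degree p > 0"
  shows "\<exists>\<alpha> \<beta> :: 'r. alg_eval \<phi> p (\<alpha> * \<beta>) \<noteq> alg_eval \<phi> p (\<beta> * \<alpha>)"
proof (rule ccontr)
  assume "\<not> ?thesis"
  then have "alg_eval \<phi> p y \<in> center" for y
    using alg_eval_central_if_cyclic[OF assms(1)] by blast
  then show False
    using commute_if_alg_eval_central[OF assms(1,3)] assms(2) by blast
qed

end
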